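(* Let $k\in\mathbb Z$, $\mathbb N_k=\{l\in\mathbb Z:l\le k\}$, and $\xi$ a random variable with $\mathbb P(\xi=l)=p_l$, $l\in\mathbb N_k$, $p_l\ge0$, $\sum_lp_l=1$, $p_k\in(0,1)$, $q_k=1-p_k$. For each $N$, let $Z$ be the Markov chain on $\Omega_k$ described in the context, $\bar\nu_N$ its invariant distribution and $\phi(m)=\sup\{i\in\mathbb N_k:m_i>0\}$. Then $$\lim_{N\to\infty}\frac{\bar\nu_N(\phi\le k-1)}{q_k^{N^2}2^N}=1.$$
   Context: $\Omega_k=\{m\in\{0,\dots,N\}^{\mathbb N_k}:\sum_{i\in\mathbb N_k}m_i=N\}$. The chain $Z$ on $\Omega_k$ has the kernel: from state $m$, take any $x\in\mathbb Z^N$ with exactly $m_l$ coordinates equal to $l$ for each $l\in\mathbb N_k$, let $\{\xi_{i,j}:1\le i,j\le N\}$ be fresh i.i.d. copies of $\xi$, and let the next state be $\big(\#\{i\le N:\max_j(x_j+\xi_{i,j})=\phi(m)+l\}\big)_{l\in\mathbb N_k}$. (Equivalently, $Z_l(t)=\#\{j:X_j(t)=\max_iX_i(t-1)+l\}$ for the particle system $X_i(t+1)=\max_j\{X_j(t)+\xi_{i,j}(t+1)\}$.) $\bar\nu_N$ is its unique invariant probability distribution. *)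

theory Defs
  imports "HOL-Probability.Probability"
begin

definition Omega :: "int \<Rightarrow> nat \<Rightarrow> (int \<Rightarrow> nat) set" where
  "Omega k N = {m. (\<forall>l. k < l \<longrightarrow> m l = 0) \<and> finite {l. m l \<noteq> 0}
                   \<and> (\<Sum>l\<in>{l. m l \<noteq> 0}. m l) = N}"

definition phi :: "int \<Rightarrow> (int \<Rightarrow> nat) \<Rightarrow> int" where
  "phi k m = Max {i. i \<le> k \<and> 0 < m i}"

text \<open>A particle configuration x in Z^N (coordinates j < N) with exactly m_l coordinates equal to l.\<close>
definition config :: "nat \<Rightarrow> (int \<Rightarrow> nat) \<Rightarrow> nat \<Rightarrow> int" where
  "config N m = (SOME x. \<forall>l. card {j. j < N \<and> x j = l} = m l)"

definition Zkernel :: "int pmf \<Rightarrow> int \<Rightarrow> nat \<Rightarrow> (int \<Rightarrow> nat) \<Rightarrow> (int \<Rightarrow> nat) pmf" where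
  "Zkernel p k N m =
     map_pmf (\<lambda>xi. \<lambda>l. if l \<le> k then
                 card {i. i < N \<and> Max {config N m j + xi (i, j) | j. j < N} = phi k m + l}
               else 0)
       (Pi_pmf ({0..<N} \<times> {0..<N}) 0 (\<lambda>_. p))"

definition invariant_Z :: "int pmf \<Rightarrow> int \<Rightarrow> nat \<Rightarrow> (int \<Rightarrow> nat) pmf \<Rightarrow> bool" where
  "invariant_Z p k N \<nu> \<longleftrightarrow> set_pmf \<nu> \<subseteq> Omega k N \<and> bind_pmf \<nu> (Zkernel p k N) = \<nu>"

end

theory Submission
  imports Defs
begin

text \<open>
  Write q = 1 - p_k and let \<Phi>(t) be the stationary mean of (q^L)^t, where L = m(phi(m)) is the
  number of particles at the current maximum. Given the state, each of the N new particles reaches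
  the new top level independently with probability 1 - q^L, so stationarity turns the generating
  function of m(k) into a binomial mixture of the \<Phi>(t); at y = 0 it gives
  P(phi \<le> k - 1) = P(m(k) = 0) = \<Phi>(N), and at y = q^s, using L = m(k) whenever m(k) > 0, it
  yields a closed system of linear inequalities for the normalized moments \<Phi>(t) / q^(N t).
  The single inequality with s = N gives the lower bound \<Phi>(N) \<ge> (1 - o(1)) q^(N^2) 2^N.
  For the upper bound the normalized moments are compared, by a maximum principle, with the
  explicit supersolution (1 + \<beta> q^(N - t))^N, \<beta> = (1 + q) / (2 q), whose excess over the
  constant solution is negligible after division by 2^N; this is where \<beta> q = (1 + q) / 2 < 1
  is used.
\<close>

section \<open>States and configurations\<close>

lemma Omega_memD:
  assumes "m \<in> Omega k N"
  shows Omega_zero_above: "\<And>l. k < l \<Longrightarrow> m l = 0"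
    and Omega_finite_support: "finite {l. 0 < m l}"
    and Omega_sum: "(\<Sum>l\<in>{l. 0 < m l}. m l) = N"
proof -
  have "{l. m l \<noteq> 0} = {l. 0 < m l}" by auto
  then show "\<And>l. k < l \<Longrightarrow> m l = 0" "finite {l. 0 < m l}" "(\<Sum>l\<in>{l. 0 < m l}. m l) = N"
    using assms unfolding Omega_def by auto
qed

lemma Omega_le_top: "m \<in> Omega k N \<Longrightarrow> 0 < m l \<Longrightarrow> l \<le> k"
  using Omega_zero_above by (metis less_irrefl not_le)

lemma Omega_le_total:
  assumes "m \<in> Omega k N" shows "m l \<le> N"
proof (cases "m l = 0")
  case False
  then have "m l \<le> (\<Sum>l\<in>{l. 0 < m l}. m l)"
    using Omega_finite_support[OF assms] by (intro member_le_sum) auto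
  then show ?thesis using Omega_sum[OF assms] by simp
qed simp

lemma phi_Omega:
  assumes m: "m \<in> Omega k N" and N: "1 \<le> N"
  shows phi_le_top: "phi k m \<le> k"
    and phi_pos: "0 < m (phi k m)"
    and le_phi: "\<And>l. 0 < m l \<Longrightarrow> l \<le> phi k m"
proof -
  have supp: "{i. i \<le> k \<and> 0 < m i} = {l. 0 < m l}"
    using Omega_le_top[OF m] by blast
  have "{l. 0 < m l} \<noteq> {}"
    using Omega_sum[OF m] N by (intro notI) simp
  then have "phi k m \<in> {l. 0 < m l}"
    unfolding phi_def supp using Omega_finite_support[OF m] by (intro Max_in)
  then show "0 < m (phi k m)" by simp
  then show "phi k m \<le> k" by (rule Omega_le_top[OF m])
  show "\<And>l. 0 < m l \<Longrightarrow> l \<le> phi k m"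
    unfolding phi_def supp using Omega_finite_support[OF m] by (intro Max_ge) auto
qed

lemma phi_eq_top: "m \<in> Omega k N \<Longrightarrow> 1 \<le> N \<Longrightarrow> 0 < m k \<Longrightarrow> phi k m = k"
  using phi_le_top le_phi by (meson order_antisym)

lemma phi_below_top_iff:
  assumes "m \<in> Omega k N" "1 \<le> N"
  shows "phi k m \<le> k - 1 \<longleftrightarrow> m k = 0"
  using phi_le_top[OF assms] le_phi[OF assms, of k] phi_pos[OF assms]
  by (cases "phi k m = k") auto

lemma config_count:
  assumes "m \<in> Omega k N"
  shows "card {j. j < N \<and> config N m j = l} = m l"
proof -
  obtain xs where xs: "mset xs = Abs_multiset m" using ex_mset by blast
  have count: "count (mset xs) = m"
    unfolding xs using Omega_finite_support[OF assms] by (rule count_Abs_multiset)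
  then have "length xs = N"
    using Omega_sum[OF assms] by (simp add: size_multiset_overloaded_eq set_mset_def flip: size_mset)
  then have "card {j. j < N \<and> xs ! j = l} = m l" for l
    using count by (simp add: length_filter_conv_card count_mset count_list_eq_length_filter eq_commute)
  then have "\<exists>x. \<forall>l. card {j. j < N \<and> x j = l} = m l" by blast
  from someI_ex[OF this] show ?thesis unfolding config_def by blast
qed

lemma config_le_phi:
  assumes "m \<in> Omega k N" "1 \<le> N" "j < N"
  shows "config N m j \<le> phi k m"
proof -
  have "0 < card {j'. j' < N \<and> config N m j' = config N m j}"
    using assms(3) by (auto simp: card_gt_0_iff)
  then show ?thesis
    using config_count[OF assms(1)] le_phi[OF assms(1,2)] by simp
qed

section \<open>The one-step kernel\<close>

lemma integrable_pmf_bounded: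
  fixes f :: "'a \<Rightarrow> real"
  assumes "\<And>x. \<bar>f x\<bar> \<le> B"
  shows "integrable (measure_pmf M) f"
  by (intro measure_pmf.integrable_const_bound[where B=B]) (use assms in auto)

lemma expectation_bind_pmf_bounded:
  fixes f :: "'b \<Rightarrow> real"
  assumes "\<And>x. 0 \<le> f x" "\<And>x. f x \<le> B"
  shows "measure_pmf.expectation (bind_pmf M K) f
       = measure_pmf.expectation M (\<lambda>x. measure_pmf.expectation (K x) f)"
proof -
  have int: "\<And>P. integrable (measure_pmf P) f"
    by (rule integrable_pmf_bounded[where B=B]) (use assms in auto)
  have "measure_pmf.expectation (bind_pmf M K) f = enn2real (\<integral>\<^sup>+x. ennreal (f x) \<partial>bind_pmf M K)"
    by (rule integral_eq_nn_integral) (use assms in auto)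
  also have "(\<integral>\<^sup>+x. ennreal (f x) \<partial>bind_pmf M K) = (\<integral>\<^sup>+x. \<integral>\<^sup>+y. ennreal (f y) \<partial>K x \<partial>M)"
    by simp
  also have "\<dots> = (\<integral>\<^sup>+x. ennreal (measure_pmf.expectation (K x) f) \<partial>M)"
    by (intro nn_integral_cong nn_integral_eq_integral int) (use assms in auto)
  also have "enn2real \<dots> = measure_pmf.expectation M (\<lambda>x. measure_pmf.expectation (K x) f)"
    by (rule integral_eq_nn_integral[symmetric])
      (auto intro!: AE_pmfI Bochner_Integration.integral_nonneg simp: assms)
  finally show ?thesis .
qed

lemma expectation_Pi_pmf_avoid:
  fixes p :: "'b pmf"
  assumes "finite I" "A \<subseteq> I"
  shows "measure_pmf.expectation (Pi_pmf I d (\<lambda>_. p)) (\<lambda>\<xi>. \<Prod>x\<in>A. if \<xi> x = v then 0 else 1 :: real)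
       = (1 - pmf p v) ^ card A"
proof -
  define g where "g x w = (if x \<in> A \<and> w = v then 0 else 1 :: real)" for x w
  have "measure_pmf.expectation p (g x) = 1 - pmf p v" if "x \<in> A" for x
  proof -
    have "g x = indicator (- {v})" using that by (auto simp: g_def fun_eq_iff)
    then show ?thesis
      using measure_pmf.prob_compl[of "{v}" p] by (simp add: measure_pmf_single Compl_eq_Diff_UNIV)
  qed
  moreover have "g x = (\<lambda>_. 1)" if "x \<notin> A" for x using that by (simp add: g_def fun_eq_iff)
  ultimately have Eg: "measure_pmf.expectation p (g x) = (if x \<in> A then 1 - pmf p v else 1)" for x
    by simp
  have "(\<Prod>x\<in>A. if \<xi> x = v then 0 else 1 :: real) = (\<Prod>x\<in>I. g x (\<xi> x))" for \<xi>
    using assms by (intro prod.mono_neutral_cong_left) (auto simp: g_def)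
  then have "measure_pmf.expectation (Pi_pmf I d (\<lambda>_. p)) (\<lambda>\<xi>. \<Prod>x\<in>A. if \<xi> x = v then 0 else 1 :: real)
      = measure_pmf.expectation (Pi_pmf I d (\<lambda>_. p)) (\<lambda>\<xi>. \<Prod>x\<in>I. g x (\<xi> x))"
    by simp
  also have "\<dots> = (\<Prod>x\<in>I. measure_pmf.expectation p (g x))"
    by (rule expectation_prod_Pi_pmf[OF assms(1)])
      (auto simp: g_def intro!: measure_pmf.integrable_const_bound[where B=1])
  also have "\<dots> = (\<Prod>x\<in>A. 1 - pmf p v)"
    using assms by (intro prod.mono_neutral_cong_right) (auto simp: Eg)
  finally show ?thesis by simp
qed

lemma expectation_prod_affine:
  fixes X :: "'i \<Rightarrow> 'a \<Rightarrow> real"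
  assumes I: "finite I" and X: "\<And>i x. \<bar>X i x\<bar> \<le> 1"
    and moments: "\<And>S. S \<subseteq> I \<Longrightarrow> measure_pmf.expectation M (\<lambda>x. \<Prod>i\<in>S. X i x) = c ^ card S"
  shows "measure_pmf.expectation M (\<lambda>x. \<Prod>i\<in>I. a * X i x + b) = (a * c + b) ^ card I"
proof -
  have int: "integrable M (\<lambda>x. \<Prod>i\<in>S. X i x)" for S
    using X by (intro measure_pmf.integrable_const_bound[where B=1])
      (auto simp: abs_prod intro!: prod_le_1)
  have "measure_pmf.expectation M (\<lambda>x. \<Prod>i\<in>I. a * X i x + b)
      = measure_pmf.expectation M (\<lambda>x. \<Sum>S\<in>Pow I. a ^ card S * b ^ card (I - S) * (\<Prod>i\<in>S. X i x))"
    by (simp add: prod_add[OF I] prod.distrib mult_ac)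
  also have "\<dots> = (\<Sum>S\<in>Pow I. a ^ card S * b ^ card (I - S) * c ^ card S)"
    using int by (simp add: moments)
  also have "\<dots> = (\<Prod>i\<in>I. a * c + b)"
    unfolding prod_add[OF I] by (simp add: power_mult_distrib mult_ac)
  finally show ?thesis by simp
qed

lemma expectation_pow_card_hit_rows:
  fixes p :: "'b pmf" and y :: real and I :: "'i set" and J :: "'j set"
  assumes I: "finite I" and J: "finite J" and L: "L \<subseteq> J"
  shows "measure_pmf.expectation (Pi_pmf (I \<times> J) d (\<lambda>_. p))
           (\<lambda>\<xi>. y ^ card {i\<in>I. \<exists>j\<in>L. \<xi> (i, j) = v})
       = ((1 - y) * (1 - pmf p v) ^ card L + y) ^ card I"
proof -
  define X where "X i \<xi> = (\<Prod>j\<in>L. if \<xi> (i, j) = v then 0 else 1 :: real)"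
    for i :: 'i and \<xi> :: "'i \<times> 'j \<Rightarrow> 'b"
  have finL: "finite L" using J L finite_subset by blast
  have X: "X i \<xi> = (if \<exists>j\<in>L. \<xi> (i, j) = v then 0 else 1)" for i \<xi>
    using finL by (simp add: X_def prod_zero)
  have "y ^ card {i\<in>I. \<exists>j\<in>L. \<xi> (i, j) = v} = (\<Prod>i\<in>I. if \<exists>j\<in>L. \<xi> (i, j) = v then y else 1)" for \<xi>
    using prod.inter_filter[OF I, of "\<lambda>_. y"] by simp
  also have "(\<Prod>i\<in>I. if \<exists>j\<in>L. \<xi> (i, j) = v then y else 1) = (\<Prod>i\<in>I. (1 - y) * X i \<xi> + y)" for \<xi>
    by (intro prod.cong) (auto simp: X)
  moreover have "measure_pmf.expectation (Pi_pmf (I \<times> J) d (\<lambda>_. p)) (\<lambda>\<xi>. \<Prod>i\<in>S. X i \<xi>)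
      = ((1 - pmf p v) ^ card L) ^ card S" if "S \<subseteq> I" for S
  proof -
    have "(\<Prod>i\<in>S. X i \<xi>) = (\<Prod>ij\<in>S \<times> L. if \<xi> ij = v then 0 else 1)" for \<xi>
      by (simp add: X_def prod.cartesian_product case_prod_beta)
    moreover have "S \<times> L \<subseteq> I \<times> J" "finite S" using that L I finite_subset by auto
    ultimately show ?thesis
      using I J by (simp add: expectation_Pi_pmf_avoid card_cartesian_product) (metis power_mult mult.commute)
  qed
  ultimately show ?thesis
    using expectation_prod_affine[OF I, of X _ "(1 - pmf p v) ^ card L" "1 - y" y] by (simp add: X)
qed

lemma Pi_pmf_entry_in_set_pmf:
  assumes "\<xi> \<in> set_pmf (Pi_pmf A d (\<lambda>_. p))" "finite A" "x \<in> A"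
  shows "\<xi> x \<in> set_pmf p"
  using assms by (auto simp: set_Pi_pmf PiE_dflt_def)

lemma Max_add_eq_iff:
  fixes x :: "nat \<Rightarrow> int" and e :: "nat \<Rightarrow> int"
  assumes "1 \<le> N" "\<And>j. j < N \<Longrightarrow> x j \<le> a" "\<And>j. j < N \<Longrightarrow> e j \<le> b"
  shows "Max {x j + e j | j. j < N} = a + b \<longleftrightarrow> (\<exists>j<N. x j = a \<and> e j = b)"
proof -
  have T: "{x j + e j | j. j < N} = (\<lambda>j. x j + e j) ` {..<N}" by auto
  have ne: "{..<N} \<noteq> {}" using assms(1) by (auto simp: lessThan_empty_iff)
  have "Max ((\<lambda>j. x j + e j) ` {..<N}) = a + b \<longleftrightarrow> a + b \<in> (\<lambda>j. x j + e j) ` {..<N}"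
    by (subst Max_eq_iff) (use assms ne in \<open>auto intro: add_mono\<close>)
  also have "\<dots> \<longleftrightarrow> (\<exists>j<N. x j = a \<and> e j = b)"
    using assms(2,3) by (auto simp: image_iff) (smt (verit))
  finally show ?thesis unfolding T .
qed

lemma expectation_Zkernel_pow_top:
  fixes y :: real
  assumes m: "m \<in> Omega k N" and N: "1 \<le> N" and supp: "set_pmf p \<subseteq> {l. l \<le> k}"
  shows "measure_pmf.expectation (Zkernel p k N m) (\<lambda>m'. y ^ m' k)
       = ((1 - y) * (1 - pmf p k) ^ m (phi k m) + y) ^ N"
proof -
  define P where "P = Pi_pmf ({0..<N} \<times> {0..<N}) 0 (\<lambda>_. p)"
  define L where "L = {j. j < N \<and> config N m j = phi k m}"
  have hit: "{i. i < N \<and> Max {config N m j + \<xi> (i, j) | j. j < N} = phi k m + k}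
      = {i\<in>{0..<N}. \<exists>j\<in>L. \<xi> (i, j) = k}" if "\<xi> \<in> set_pmf P" for \<xi>
  proof -
    have "\<xi> (i, j) \<le> k" if "i < N" "j < N" for i j
    proof -
      have "\<xi> (i, j) \<in> set_pmf p"
        using Pi_pmf_entry_in_set_pmf[OF \<open>\<xi> \<in> set_pmf P\<close>[unfolded P_def]] that by auto
      then show ?thesis using supp by auto
    qed
    then show ?thesis
      using Max_add_eq_iff[OF N config_le_phi[OF m N]] by (auto simp: L_def)
  qed
  have "measure_pmf.expectation (Zkernel p k N m) (\<lambda>m'. y ^ m' k)
      = measure_pmf.expectation P (\<lambda>\<xi>. y ^ card {i\<in>{0..<N}. \<exists>j\<in>L. \<xi> (i, j) = k})"
    unfolding Zkernel_def P_def[symmetric] by (auto intro!: integral_cong_AE AE_pmfI simp: hit)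
  also have "\<dots> = ((1 - y) * (1 - pmf p k) ^ card L + y) ^ N"
    unfolding P_def by (subst expectation_pow_card_hit_rows) (auto simp: L_def)
  finally show ?thesis
    using config_count[OF m] by (simp add: L_def)
qed

section \<open>Moments of a stationary distribution\<close>

definition binomial_mixture :: "nat \<Rightarrow> (nat \<Rightarrow> real) \<Rightarrow> real \<Rightarrow> real" where
  "binomial_mixture N \<Phi> y = (\<Sum>t\<le>N. real (N choose t) * (1 - y) ^ t * y ^ (N - t) * \<Phi> t)"

definition lead_moment :: "int pmf \<Rightarrow> int \<Rightarrow> (int \<Rightarrow> nat) pmf \<Rightarrow> nat \<Rightarrow> real" where
  "lead_moment p k \<nu> t = measure_pmf.expectation \<nu> (\<lambda>m. ((1 - pmf p k) ^ m (phi k m)) ^ t)"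

lemma binomial_mixture_0: "binomial_mixture N \<Phi> 0 = \<Phi> N"
  unfolding binomial_mixture_def
  by (subst sum.remove[of _ N]) (auto intro!: sum.neutral)

text \<open>
  The inequalities satisfied by the moments \<Phi> t = E[(q ^ m(phi m)) ^ t] of a stationary
  distribution; the asymptotic analysis uses nothing else about the chain.
\<close>

locale stationary_moments =
  fixes q :: real and N :: nat and \<Phi> :: "nat \<Rightarrow> real"
  assumes q_pos: "0 < q" and q_less_1: "q < 1" and N_pos: "1 \<le> N"
    and moment_0: "\<Phi> 0 = 1"
    and moment_lower: "\<And>t. q ^ (N * t) \<le> \<Phi> t"
    and mixture_lower: "\<And>s. 1 \<le> s \<Longrightarrow> s \<le> N \<Longrightarrow>
           \<Phi> s + (1 - q ^ s) * \<Phi> N \<le> binomial_mixture N \<Phi> (q ^ s)"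
    and mixture_upper: "binomial_mixture N \<Phi> (q ^ N) \<le> 2 * \<Phi> N"

context
  fixes p :: "int pmf" and k :: int and N :: nat and \<nu> :: "(int \<Rightarrow> nat) pmf"
  assumes supp: "set_pmf p \<subseteq> {l. l \<le> k}" and N: "1 \<le> N" and inv: "invariant_Z p k N \<nu>"
begin

lemma invariant_support: "m \<in> set_pmf \<nu> \<Longrightarrow> m \<in> Omega k N"
  using inv unfolding invariant_Z_def by auto

lemma invariant_pgf_top:
  fixes y :: real
  assumes y: "0 \<le> y" "y \<le> 1"
  shows "measure_pmf.expectation \<nu> (\<lambda>m. y ^ m k) = binomial_mixture N (lead_moment p k \<nu>) y"
proof -
  define a where "a m = (1 - pmf p k) ^ m (phi k m)" for m :: "int \<Rightarrow> nat"
  have a: "0 \<le> a m" "a m \<le> 1" for m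
    using pmf_le_1[of p k] unfolding a_def by (auto intro: power_le_one)
  have "measure_pmf.expectation \<nu> (\<lambda>m. y ^ m k)
      = measure_pmf.expectation (bind_pmf \<nu> (Zkernel p k N)) (\<lambda>m. y ^ m k)"
    using inv unfolding invariant_Z_def by simp
  also have "\<dots> = measure_pmf.expectation \<nu> (\<lambda>m. measure_pmf.expectation (Zkernel p k N m) (\<lambda>m'. y ^ m' k))"
    by (rule expectation_bind_pmf_bounded[where B=1]) (use y in \<open>auto intro: power_le_one\<close>)
  also have "\<dots> = measure_pmf.expectation \<nu> (\<lambda>m. ((1 - y) * a m + y) ^ N)"
    by (intro integral_cong_AE AE_pmfI)
      (simp_all add: a_def expectation_Zkernel_pow_top[OF invariant_support N supp])
  also have "\<dots> = measure_pmf.expectation \<nu>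
      (\<lambda>m. \<Sum>t\<le>N. real (N choose t) * (1 - y) ^ t * y ^ (N - t) * a m ^ t)"
    by (simp add: binomial_ring power_mult_distrib mult_ac)
  also have "\<dots> = binomial_mixture N (lead_moment p k \<nu>) y"
    using a unfolding binomial_mixture_def lead_moment_def a_def[symmetric]
    by (subst Bochner_Integration.integral_sum)
      (auto intro!: integrable_pmf_bounded[where B=1] simp: power_le_one)
  finally show ?thesis .
qed

lemma prob_phi_below_top:
  "measure_pmf.prob \<nu> {m. phi k m \<le> k - 1} = lead_moment p k \<nu> N"
proof -
  have "measure_pmf.prob \<nu> {m. phi k m \<le> k - 1}
      = measure_pmf.expectation \<nu> (indicator {m. phi k m \<le> k - 1})"
    by simp
  also have "\<dots> = measure_pmf.expectation \<nu> (\<lambda>m. (0::real) ^ m k)"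
  proof (intro integral_cong_AE AE_pmfI)
    fix m assume "m \<in> set_pmf \<nu>"
    from phi_below_top_iff[OF invariant_support[OF this] N]
    show "indicator {m. phi k m \<le> k - 1} m = (0::real) ^ m k"
      by (cases "m k") (auto simp: indicator_def)
  qed simp_all
  finally show ?thesis using invariant_pgf_top[of 0] by (simp add: binomial_mixture_0)
qed

lemma invariant_pgf_top_power:
  fixes s :: nat
  defines "q \<equiv> 1 - pmf p k"
  shows "binomial_mixture N (lead_moment p k \<nu>) (q ^ s)
       = lead_moment p k \<nu> s + measure_pmf.expectation \<nu> (\<lambda>m. (1 - (q ^ m (phi k m)) ^ s) * 0 ^ m k)"
proof -
  have q: "0 \<le> q" "q \<le> 1" unfolding q_def by (simp_all add: pmf_le_1)
  have pointwise: "(q ^ s) ^ m k = (q ^ m (phi k m)) ^ s + (1 - (q ^ m (phi k m)) ^ s) * 0 ^ m k"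
    if "m \<in> set_pmf \<nu>" for m
  proof (cases "m k = 0")
    case False
    then show ?thesis
      using phi_eq_top[OF invariant_support[OF that] N] by (simp add: power_mult[symmetric] mult.commute)
  qed simp
  have bounded: "\<bar>(q ^ m (phi k m)) ^ t\<bar> \<le> 1" "\<bar>(1 - (q ^ m (phi k m)) ^ t) * 0 ^ m k\<bar> \<le> 1"
    for m :: "int \<Rightarrow> nat" and t
    using q by (auto simp: power_le_one power_mult[symmetric] abs_mult intro!: mult_le_one)
  have "binomial_mixture N (lead_moment p k \<nu>) (q ^ s) = measure_pmf.expectation \<nu> (\<lambda>m. (q ^ s) ^ m k)"
    using q by (simp add: invariant_pgf_top power_le_one)
  also have "\<dots> = measure_pmf.expectation \<nu>
      (\<lambda>m. (q ^ m (phi k m)) ^ s + (1 - (q ^ m (phi k m)) ^ s) * 0 ^ m k)"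
    by (intro integral_cong_AE AE_pmfI) (simp_all add: pointwise)
  also have "\<dots> = lead_moment p k \<nu> s + measure_pmf.expectation \<nu> (\<lambda>m. (1 - (q ^ m (phi k m)) ^ s) * 0 ^ m k)"
    unfolding lead_moment_def q_def[symmetric]
    by (rule Bochner_Integration.integral_add) (rule integrable_pmf_bounded[where B=1], rule bounded)+
  finally show ?thesis .
qed

lemma lead_weight_bounds:
  defines "q \<equiv> 1 - pmf p k"
  assumes "m \<in> set_pmf \<nu>"
  shows "q ^ N \<le> q ^ m (phi k m)" "q ^ m (phi k m) \<le> q"
proof -
  have "0 \<le> q" "q \<le> 1" unfolding q_def by (simp_all add: pmf_le_1)
  moreover have "1 \<le> m (phi k m)" "m (phi k m) \<le> N"
    using phi_pos Omega_le_total invariant_support[OF assms(2)] N by (auto simp: Suc_le_eq)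
  ultimately show "q ^ N \<le> q ^ m (phi k m)" "q ^ m (phi k m) \<le> q"
    using power_decreasing[of 1 "m (phi k m)" q] power_decreasing[of "m (phi k m)" N q] by auto
qed

lemma lead_moment_top: "lead_moment p k \<nu> N = measure_pmf.expectation \<nu> (\<lambda>m. (0::real) ^ m k)"
  using invariant_pgf_top[of 0] by (simp add: binomial_mixture_0)

lemma invariant_pgf_top_power_bounds:
  fixes s :: nat
  defines "q \<equiv> 1 - pmf p k"
  shows "lead_moment p k \<nu> s + (1 - q ^ s) * lead_moment p k \<nu> N \<le> binomial_mixture N (lead_moment p k \<nu>) (q ^ s)"
    and "binomial_mixture N (lead_moment p k \<nu>) (q ^ s) \<le> lead_moment p k \<nu> s + lead_moment p k \<nu> N"
proof -
  define a where "a m = (q ^ m (phi k m)) ^ s" for m :: "int \<Rightarrow> nat"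
  have q: "0 \<le> q" "q \<le> 1" unfolding q_def by (simp_all add: pmf_le_1)
  have a: "0 \<le> a m" "a m \<le> 1" for m unfolding a_def using q by (auto intro!: power_le_one)
  have integrable: "integrable (measure_pmf \<nu>) (\<lambda>m. c * (0::real) ^ m k)" for c
    by (rule integrable_pmf_bounded[where B="\<bar>c\<bar>"]) (simp add: abs_mult power_0_left)
  have integrable_rest: "integrable (measure_pmf \<nu>) (\<lambda>m. (1 - a m) * 0 ^ m k)"
    by (rule integrable_pmf_bounded[where B=1]) (use a in \<open>auto simp: power_0_left\<close>)
  have "(1 - q ^ s) * lead_moment p k \<nu> N = measure_pmf.expectation \<nu> (\<lambda>m. (1 - q ^ s) * 0 ^ m k)"
    unfolding lead_moment_top by simp
  also have "\<dots> \<le> measure_pmf.expectation \<nu> (\<lambda>m. (1 - a m) * 0 ^ m k)"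
  proof (intro integral_mono_AE AE_pmfI integrable integrable_rest)
    fix m assume "m \<in> set_pmf \<nu>"
    then have "a m \<le> q ^ s"
      using lead_weight_bounds(2) q unfolding a_def q_def by (auto intro: power_mono)
    then show "(1 - q ^ s) * 0 ^ m k \<le> (1 - a m) * 0 ^ m k" by (simp add: power_0_left)
  qed
  finally have "(1 - q ^ s) * lead_moment p k \<nu> N \<le> measure_pmf.expectation \<nu> (\<lambda>m. (1 - a m) * 0 ^ m k)" .
  moreover have "measure_pmf.expectation \<nu> (\<lambda>m. (1 - a m) * 0 ^ m k) \<le> lead_moment p k \<nu> N"
    unfolding lead_moment_top using a
    by (intro integral_mono_AE AE_pmfI integrable_rest integrable_pmf_bounded[where B=1])
      (auto simp: power_0_left)
  ultimately show "lead_moment p k \<nu> s + (1 - q ^ s) * lead_moment p k \<nu> N \<le> binomial_mixture N (lead_moment p k \<nu>) (q ^ s)"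
    and "binomial_mixture N (lead_moment p k \<nu>) (q ^ s) \<le> lead_moment p k \<nu> s + lead_moment p k \<nu> N"
    unfolding q_def a_def invariant_pgf_top_power by simp_all
qed

lemma invariant_stationary_moments:
  assumes pk: "0 < pmf p k" "pmf p k < 1"
  shows "stationary_moments (1 - pmf p k) N (lead_moment p k \<nu>)"
proof
  show "0 < 1 - pmf p k" "1 - pmf p k < 1" "1 \<le> N" using pk N by auto
  show "lead_moment p k \<nu> 0 = 1" by (simp add: lead_moment_def)
  show "(1 - pmf p k) ^ (N * t) \<le> lead_moment p k \<nu> t" for t
    unfolding lead_moment_def power_mult using lead_weight_bounds pk
    by (intro measure_pmf.integral_ge_const AE_pmfI power_mono)
      (auto intro!: integrable_pmf_bounded[where B=1] power_le_one)
  show "lead_moment p k \<nu> s + (1 - (1 - pmf p k) ^ s) * lead_moment p k \<nu> N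
      \<le> binomial_mixture N (lead_moment p k \<nu>) ((1 - pmf p k) ^ s)" for s
    by (rule invariant_pgf_top_power_bounds(1))
  show "binomial_mixture N (lead_moment p k \<nu>) ((1 - pmf p k) ^ N) \<le> 2 * lead_moment p k \<nu> N"
    using invariant_pgf_top_power_bounds(2)[of N] by simp
qed

end

section \<open>The supersolution profile\<close>

lemma power_diff_bounds:
  fixes a b :: real
  assumes "0 \<le> b" "b \<le> a"
  shows power_diff_le: "a ^ n - b ^ n \<le> real n * (a - b) * a ^ (n - 1)"
    and power_diff_ge: "real n * (a - b) * b ^ (n - 1) \<le> a ^ n - b ^ n"
proof -
  have eq: "a ^ n - b ^ n = (a - b) * (\<Sum>i<n. b ^ (n - Suc i) * a ^ i)"
    by (rule power_diff_sumr2)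
  have term_bounds: "b ^ (n - Suc i) * a ^ i \<le> a ^ (n - 1)" "b ^ (n - 1) \<le> b ^ (n - Suc i) * a ^ i"
    if "i < n" for i
  proof -
    have "b ^ (n - Suc i) * a ^ i \<le> a ^ (n - Suc i) * a ^ i"
      "b ^ (n - Suc i) * b ^ i \<le> b ^ (n - Suc i) * a ^ i"
      using assms by (auto intro!: mult_right_mono mult_left_mono power_mono)
    moreover have "a ^ (n - Suc i) * a ^ i = a ^ (n - 1)" "b ^ (n - Suc i) * b ^ i = b ^ (n - 1)"
      using that by (simp_all add: power_add[symmetric])
    ultimately show "b ^ (n - Suc i) * a ^ i \<le> a ^ (n - 1)" "b ^ (n - 1) \<le> b ^ (n - Suc i) * a ^ i"
      by simp_all
  qed
  have "(\<Sum>i<n. b ^ (n - Suc i) * a ^ i) \<le> (\<Sum>i<n. a ^ (n - 1))"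
    "(\<Sum>i<n. b ^ (n - 1)) \<le> (\<Sum>i<n. b ^ (n - Suc i) * a ^ i)"
    by (intro sum_mono term_bounds; simp)+
  then have upper: "(\<Sum>i<n. b ^ (n - Suc i) * a ^ i) \<le> real n * a ^ (n - 1)"
    and lower: "real n * b ^ (n - 1) \<le> (\<Sum>i<n. b ^ (n - Suc i) * a ^ i)"
    by simp_all
  have "0 \<le> a - b" using assms by simp
  from mult_left_mono[OF upper this] mult_left_mono[OF lower this]
  show "a ^ n - b ^ n \<le> real n * (a - b) * a ^ (n - 1)"
    "real n * (a - b) * b ^ (n - 1) \<le> a ^ n - b ^ n"
    unfolding eq by (simp_all add: mult_ac)
qed

lemma binomial_sum_from_1:
  fixes x c :: real
  shows "(\<Sum>t\<in>{1..N}. real (N choose t) * x ^ t * c ^ (N - t)) = (x + c) ^ N - c ^ N"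
proof -
  have "{..N} = insert 0 {1..N}" by auto
  then show ?thesis by (simp add: binomial_ring)
qed

lemma power_le_exp:
  fixes x :: real assumes "0 \<le> x"
  shows "(1 + x) ^ N \<le> exp (real N * x)"
proof -
  have "(1 + x) ^ N \<le> exp x ^ N" using assms by (intro power_mono) (auto simp: exp_ge_add_one_self)
  then show ?thesis by (simp add: exp_of_nat_mult)
qed

definition beta :: "real \<Rightarrow> real" where "beta q = (1 + q) / (2 * q)"

definition super_profile :: "real \<Rightarrow> nat \<Rightarrow> nat \<Rightarrow> real" where
  "super_profile q N t = (1 + beta q * q ^ (N - t)) ^ N"

definition super_excess :: "real \<Rightarrow> nat \<Rightarrow> real \<Rightarrow> real" where
  "super_excess q N x = (\<Sum>j\<in>{1..N}. real (N choose j) * beta q ^ j * ((x + q ^ j) ^ N - (q ^ j) ^ N))"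

definition super_weight :: "real \<Rightarrow> nat \<Rightarrow> real \<Rightarrow> real" where
  "super_weight q N y = (\<Sum>j\<in>{1..N}. real (N choose j) * beta q ^ j * ((y + q ^ j) / (1 + y)) ^ (N - 1))"

definition super_admissible :: "real \<Rightarrow> nat \<Rightarrow> bool" where
  "super_admissible q N \<longleftrightarrow>
     super_weight q N q \<le> (beta q - 1) / 2 \<and> (2 * q / (1 + q)) ^ (N - 1) \<le> (beta q - 1) / 4"

lemma beta_gt_1: "0 < q \<Longrightarrow> q < 1 \<Longrightarrow> 1 < beta q"
  unfolding beta_def by (simp add: field_simps)

lemma super_profile_ge_1: "0 < q \<Longrightarrow> q < 1 \<Longrightarrow> 1 \<le> super_profile q N t"
  unfolding super_profile_def using beta_gt_1[of q] by (intro one_le_power) auto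

lemma super_profile_sum:
  fixes q x :: real
  shows "(\<Sum>t\<in>{1..N}. real (N choose t) * x ^ t * super_profile q N t)
       = ((1 + x) ^ N - 1) + super_excess q N x"
proof -
  have "(\<Sum>t\<in>{1..N}. real (N choose t) * x ^ t * super_profile q N t)
      = (\<Sum>t\<in>{1..N}. \<Sum>j\<le>N. real (N choose j) * beta q ^ j * (real (N choose t) * x ^ t * (q ^ j) ^ (N - t)))"
  proof (intro sum.cong refl)
    fix t
    have "super_profile q N t = (\<Sum>j\<le>N. real (N choose j) * (beta q * q ^ (N - t)) ^ j * 1 ^ (N - j))"
      unfolding super_profile_def using binomial_ring[of "beta q * q ^ (N - t)" 1 N] by (simp add: add.commute)
    then show "real (N choose t) * x ^ t * super_profile q N t
      = (\<Sum>j\<le>N. real (N choose j) * beta q ^ j * (real (N choose t) * x ^ t * (q ^ j) ^ (N - t)))"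
      by (simp add: sum_distrib_left power_mult_distrib power_mult[symmetric] mult_ac)
  qed
  also have "\<dots> = (\<Sum>j\<le>N. real (N choose j) * beta q ^ j *
      (\<Sum>t\<in>{1..N}. real (N choose t) * x ^ t * (q ^ j) ^ (N - t)))"
    by (subst sum.swap) (simp only: sum_distrib_left)
  also have "\<dots> = (\<Sum>j\<le>N. real (N choose j) * beta q ^ j * ((x + q ^ j) ^ N - (q ^ j) ^ N))"
    by (simp only: binomial_sum_from_1)
  also have "{..N} = insert 0 {1..N}" by auto
  finally show ?thesis by (simp add: super_excess_def add.commute)
qed

lemma super_profile_sum_minus_1:
  "(\<Sum>t\<in>{1..N}. real (N choose t) * x ^ t * (super_profile q N t - 1)) = super_excess q N x"
  using super_profile_sum[of N x q] binomial_sum_from_1[of N x 1]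
  by (simp add: right_diff_distrib sum_subtractf add.commute)

context
  fixes q :: real and N :: nat
  assumes q: "0 < q" "q < 1"
begin

lemma super_excess_mono: "0 \<le> x \<Longrightarrow> x \<le> y \<Longrightarrow> super_excess q N x \<le> super_excess q N y"
  unfolding super_excess_def using q beta_gt_1[OF q]
  by (intro sum_mono mult_left_mono diff_right_mono power_mono) auto

lemma super_excess_le_weight:
  assumes "0 \<le> y"
  shows "super_excess q N y \<le> real N * y * (1 + y) ^ (N - 1) * super_weight q N y"
proof -
  have "super_excess q N y \<le> (\<Sum>j\<in>{1..N}. real (N choose j) * beta q ^ j * (real N * y * (y + q ^ j) ^ (N - 1)))"
    unfolding super_excess_def
  proof (intro sum_mono mult_left_mono)
    fix j
    show "(y + q ^ j) ^ N - (q ^ j) ^ N \<le> real N * y * (y + q ^ j) ^ (N - 1)"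
      using power_diff_le[of "q ^ j" "y + q ^ j" N] assms q by simp
    show "0 \<le> real (N choose j) * beta q ^ j" using beta_gt_1[OF q] by simp
  qed
  also have "\<dots> = real N * y * (1 + y) ^ (N - 1) * super_weight q N y"
    unfolding super_weight_def sum_distrib_left
    using assms by (intro sum.cong refl) (simp add: power_divide field_simps)
  finally show ?thesis .
qed

lemma super_weight_mono:
  assumes "0 \<le> y" "y \<le> q"
  shows "super_weight q N y \<le> super_weight q N q"
  unfolding super_weight_def
proof (intro sum_mono mult_left_mono power_mono)
  fix j :: nat
  have "y * (1 - q ^ j) \<le> q * (1 - q ^ j)"
    using assms q by (intro mult_right_mono) (auto simp: power_le_one)
  then show "(y + q ^ j) / (1 + y) \<le> (q + q ^ j) / (1 + q)"
    using assms q by (simp add: field_simps)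
  show "0 \<le> (y + q ^ j) / (1 + y)" "0 \<le> real (N choose j) * beta q ^ j"
    using assms q beta_gt_1[OF q] by auto
qed

lemma super_excess_le_gap:
  assumes adm: "super_admissible q N" and x: "0 \<le> x" "x \<le> y" "y \<le> q"
  shows "super_excess q N x \<le> real N * (beta q - 1) * y * (1 + y) ^ (N - 1) / 2"
proof -
  have "super_excess q N x \<le> real N * y * (1 + y) ^ (N - 1) * super_weight q N y"
    using super_excess_mono[of x y] super_excess_le_weight[of y] x by simp
  also have "\<dots> \<le> real N * y * (1 + y) ^ (N - 1) * ((beta q - 1) / 2)"
    using super_weight_mono[of y] adm x unfolding super_admissible_def
    by (intro mult_left_mono) auto
  finally show ?thesis by (simp add: mult_ac)
qed

lemma top_power_le_gap:
  assumes adm: "super_admissible q N" and N: "1 \<le> N" and x: "0 \<le> x" "x \<le> y" "y \<le> q"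
  shows "2 ^ N * x ^ N \<le> real N * (beta q - 1) * y * (1 + y) ^ (N - 1) / 2"
proof -
  have "2 * y * (1 + q) \<le> 2 * q * (1 + y)" using x by (simp add: algebra_simps)
  then have "2 * y \<le> 2 * q / (1 + q) * (1 + y)" using q by (simp add: field_simps)
  then have "(2 * y) ^ (N - 1) \<le> (2 * q / (1 + q) * (1 + y)) ^ (N - 1)"
    using x by (intro power_mono) auto
  also have "\<dots> = (2 * q / (1 + q)) ^ (N - 1) * (1 + y) ^ (N - 1)"
    by (rule power_mult_distrib)
  also have "\<dots> \<le> (beta q - 1) / 4 * (1 + y) ^ (N - 1)"
    using adm x unfolding super_admissible_def by (intro mult_right_mono) auto
  finally have le: "(2 * y) ^ (N - 1) \<le> (beta q - 1) / 4 * (1 + y) ^ (N - 1)" .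
  have "2 ^ N * x ^ N \<le> 2 ^ N * y ^ N"
    using x by (intro mult_left_mono power_mono) auto
  also have "\<dots> = 2 * y * (2 * y) ^ (N - 1)"
    using N by (cases N) (simp_all add: power_mult_distrib)
  also have "\<dots> \<le> 2 * y * ((beta q - 1) / 4 * (1 + y) ^ (N - 1))"
    using x by (intro mult_left_mono[OF le]) simp
  also have "\<dots> = 1 * ((beta q - 1) * y * (1 + y) ^ (N - 1)) / 2"
    by simp
  also have "\<dots> \<le> real N * ((beta q - 1) * y * (1 + y) ^ (N - 1)) / 2"
    using N x beta_gt_1[OF q] by (intro divide_right_mono mult_right_mono) auto
  finally show ?thesis by (simp add: mult_ac)
qed

lemma super_profile_gap:
  assumes "0 \<le> y"
  shows "real N * (beta q - 1) * y * (1 + y) ^ (N - 1) \<le> (1 + beta q * y) ^ N - (1 + y) ^ N"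
  using power_diff_ge[of "1 + y" "1 + beta q * y" N] assms beta_gt_1[OF q]
    mult_right_mono[of 1 "beta q" y]
  by (simp add: algebra_simps)

text \<open>
  With R = \<Phi> N / (q ^ (N * N) * 2 ^ N), the term 1 + 2 ^ N R x ^ N is the contribution of
  the moments t = 0 and t = N to the rescaled system; the excess and weight sums control the rest.
\<close>

lemma supersolution_step:
  assumes adm: "super_admissible q N" and s: "s \<in> {1..N-1}" and x: "0 \<le> x" "x \<le> q ^ (N - s)"
    and R: "0 \<le> R"
  shows "1 + 2 ^ N * R * x ^ N
           + (\<Sum>t\<in>{1..N-1}. real (N choose t) * x ^ t * (super_profile q N t + R * (super_profile q N t - 1)))
         \<le> super_profile q N s + R * (super_profile q N s - 1)"
proof -
  define F where "F = super_profile q N"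
  define y where "y = q ^ (N - s)"
  define D where "D = real N * (beta q - 1) * y * (1 + y) ^ (N - 1)"
  have N: "1 \<le> N" using s by auto
  have y: "0 \<le> y" "y \<le> q" "x \<le> y"
    unfolding y_def using q s x power_decreasing[of 1 "N - s" q] by auto
  have F1: "0 \<le> F t - 1" "0 \<le> F t" for t
    unfolding F_def using super_profile_ge_1[OF q] by (simp, smt (verit))
  have sub: "{1..N-1} \<subseteq> {1..N}" by auto
  have "(\<Sum>t\<in>{1..N-1}. real (N choose t) * x ^ t * F t) \<le> (\<Sum>t\<in>{1..N}. real (N choose t) * x ^ t * F t)"
    "(\<Sum>t\<in>{1..N-1}. real (N choose t) * x ^ t * (F t - 1)) \<le> (\<Sum>t\<in>{1..N}. real (N choose t) * x ^ t * (F t - 1))"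
    using x F1 by (intro sum_mono2 sub; auto intro!: mult_nonneg_nonneg)+
  then have sums: "(\<Sum>t\<in>{1..N-1}. real (N choose t) * x ^ t * F t) \<le> (1 + x) ^ N - 1 + super_excess q N x"
    "(\<Sum>t\<in>{1..N-1}. real (N choose t) * x ^ t * (F t - 1)) \<le> super_excess q N x"
    unfolding F_def super_profile_sum super_profile_sum_minus_1 by simp_all
  have "(1 + x) ^ N \<le> (1 + y) ^ N" "1 \<le> (1 + y) ^ N" "0 \<le> 2 ^ N * x ^ N"
    using x y by (auto intro: power_mono one_le_power)
  moreover have "super_excess q N x \<le> D / 2" "2 ^ N * x ^ N \<le> D / 2"
    unfolding D_def using super_excess_le_gap top_power_le_gap adm N x y by auto
  moreover have "D \<le> F s - (1 + y) ^ N"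
    unfolding D_def F_def super_profile_def y_def[symmetric] using super_profile_gap y by simp
  ultimately have "1 + (\<Sum>t\<in>{1..N-1}. real (N choose t) * x ^ t * F t) \<le> F s"
    "2 ^ N * x ^ N + (\<Sum>t\<in>{1..N-1}. real (N choose t) * x ^ t * (F t - 1)) \<le> F s - 1"
    using sums by linarith+
  then have "1 + (\<Sum>t\<in>{1..N-1}. real (N choose t) * x ^ t * F t) \<le> F s"
    "R * (2 ^ N * x ^ N + (\<Sum>t\<in>{1..N-1}. real (N choose t) * x ^ t * (F t - 1))) \<le> R * (F s - 1)"
    using R by (auto intro: mult_left_mono)
  moreover have "(\<Sum>t\<in>{1..N-1}. real (N choose t) * x ^ t * (F t + R * (F t - 1)))
      = (\<Sum>t\<in>{1..N-1}. real (N choose t) * x ^ t * F t) + R * (\<Sum>t\<in>{1..N-1}. real (N choose t) * x ^ t * (F t - 1))"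
    unfolding sum_distrib_left sum.distrib[symmetric] by (intro sum.cong refl) (simp add: algebra_simps)
  ultimately show ?thesis unfolding F_def[symmetric] by (simp add: algebra_simps)
qed

end

section \<open>Comparison principle and binomial tail bounds\<close>

lemma subsolution_le_supersolution:
  fixes G H e :: "nat \<Rightarrow> real" and B :: "nat \<Rightarrow> nat \<Rightarrow> real"
  assumes fin: "finite K"
    and G: "\<And>s. s \<in> K \<Longrightarrow> G s \<le> e s + (\<Sum>t\<in>K. B s t * G t)"
    and H: "\<And>s. s \<in> K \<Longrightarrow> e s + (\<Sum>t\<in>K. B s t * H t) \<le> H s"
    and B: "\<And>s t. s \<in> K \<Longrightarrow> t \<in> K \<Longrightarrow> 0 \<le> B s t"
    and e: "\<And>s. s \<in> K \<Longrightarrow> 0 < e s"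
    and H_pos: "\<And>s. s \<in> K \<Longrightarrow> 0 < H s"
    and s: "s \<in> K"
  shows "G s \<le> H s"
proof (rule ccontr)
  assume "\<not> G s \<le> H s"
  define r where "r t = G t / H t" for t
  define lam where "lam = Max (r ` K)"
  have ne: "r ` K \<noteq> {}" using s by auto
  obtain s1 where s1: "s1 \<in> K" "r s1 = lam"
    using Max_in[OF finite_imageI[OF fin] ne] unfolding lam_def by auto
  have r_le: "r t \<le> lam" if "t \<in> K" for t unfolding lam_def using fin that by auto
  have "1 < r s" using \<open>\<not> G s \<le> H s\<close> H_pos[OF s] unfolding r_def by (simp add: field_simps)
  then have lam: "1 < lam" using r_le[OF s] by simp
  have G_le: "G t \<le> lam * H t" if "t \<in> K" for t
    using r_le[OF that] H_pos[OF that] unfolding r_def by (simp add: field_simps)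
  have "G s1 \<le> e s1 + (\<Sum>t\<in>K. B s1 t * G t)" by (rule G[OF s1(1)])
  also have "\<dots> \<le> e s1 + (\<Sum>t\<in>K. B s1 t * (lam * H t))"
    by (intro add_left_mono sum_mono mult_left_mono G_le B s1(1))
  also have "\<dots> = e s1 + lam * (\<Sum>t\<in>K. B s1 t * H t)"
    by (simp add: sum_distrib_left mult_ac)
  also have "\<dots> \<le> e s1 + lam * (H s1 - e s1)"
    using H[OF s1(1)] lam by (intro add_left_mono mult_left_mono) auto
  also have "\<dots> < lam * H s1"
    using e[OF s1(1)] lam by (simp add: algebra_simps)
  finally show False using s1(2) H_pos[OF s1(1)] unfolding r_def by (simp add: field_simps)
qed

lemma powr_power_eq: "0 < q \<Longrightarrow> (q powr \<delta>) ^ N = q powr (\<delta> * real N)"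
  by (simp add: powr_powr powr_realpow[symmetric] mult.commute)

lemma power_le_powr_power:
  fixes q :: real
  assumes "0 < q" "q \<le> 1" "\<delta> * real N \<le> real j"
  shows "q ^ j \<le> (q powr \<delta>) ^ N"
  using powr_mono'[of "\<delta> * real N" "real j" q] assms by (simp add: powr_power_eq powr_realpow)

lemma powr_power_le_power:
  fixes q :: real
  assumes "0 < q" "q \<le> 1" "real j \<le> \<delta> * real N"
  shows "(q powr \<delta>) ^ N \<le> q ^ j"
  using powr_mono'[of "real j" "\<delta> * real N" q] assms by (simp add: powr_power_eq powr_realpow)

text \<open>
  Chernoff-type splitting: indices j \<ge> \<delta> N are controlled by A, and for j < \<delta> N the weight
  z^j / z^(\<delta> N) \<ge> 1 is inserted before summing the binomial series.
\<close>

lemma binomial_sum_split_bound: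
  fixes T :: "nat \<Rightarrow> real" and z \<delta> w A B :: real
  assumes J: "J \<subseteq> {..N}" and z: "0 < z" "z \<le> 1" and w: "0 \<le> w" and AB: "0 \<le> A" "0 \<le> B"
    and large: "\<And>j. j \<in> J \<Longrightarrow> \<delta> * real N \<le> real j \<Longrightarrow> T j \<le> real (N choose j) * w ^ j * A"
    and small: "\<And>j. j \<in> J \<Longrightarrow> real j < \<delta> * real N \<Longrightarrow> T j \<le> real (N choose j) * w ^ j * B"
  shows "(\<Sum>j\<in>J. T j) \<le> A * (1 + w) ^ N + B * ((1 + w * z) / z powr \<delta>) ^ N"
proof -
  define \<zeta> where "\<zeta> = z powr \<delta>"
  define U where "U j = real (N choose j) * w ^ j * A + real (N choose j) * (w * z) ^ j * B / \<zeta> ^ N" for j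
  have U0: "0 \<le> U j" for j unfolding U_def \<zeta>_def using w z AB by simp
  have "T j \<le> U j" if j: "j \<in> J" for j
  proof (cases "\<delta> * real N \<le> real j")
    case True
    have "0 \<le> real (N choose j) * (w * z) ^ j * B / \<zeta> ^ N"
      unfolding \<zeta>_def using w z AB by simp
    then show ?thesis using large[OF j True] unfolding U_def by linarith
  next
    case False
    have "\<zeta> ^ N \<le> z ^ j"
      unfolding \<zeta>_def using powr_power_le_power[of z j \<delta> N] False z by simp
    then have "1 \<le> z ^ j / \<zeta> ^ N" using z by (simp add: \<zeta>_def)
    then have "real (N choose j) * w ^ j * B \<le> real (N choose j) * w ^ j * B * (z ^ j / \<zeta> ^ N)"
      using mult_left_mono[of 1 "z ^ j / \<zeta> ^ N" "real (N choose j) * w ^ j * B"] w AB by simp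
    also have "\<dots> = real (N choose j) * (w * z) ^ j * B / \<zeta> ^ N"
      by (simp add: power_mult_distrib)
    finally have "T j \<le> real (N choose j) * (w * z) ^ j * B / \<zeta> ^ N"
      using small[OF j] False by linarith
    moreover have "0 \<le> real (N choose j) * w ^ j * A" using w AB by simp
    ultimately show ?thesis unfolding U_def by linarith
  qed
  then have "(\<Sum>j\<in>J. T j) \<le> (\<Sum>j\<in>J. U j)" by (rule sum_mono)
  also have "\<dots> \<le> (\<Sum>j\<le>N. U j)" using J U0 by (intro sum_mono2) auto
  also have "\<dots> = A * (\<Sum>j\<le>N. real (N choose j) * w ^ j * 1 ^ (N - j))
      + B / \<zeta> ^ N * (\<Sum>j\<le>N. real (N choose j) * (w * z) ^ j * 1 ^ (N - j))"
    unfolding U_def by (simp add: sum.distrib sum_distrib_left mult_ac)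
  also have "\<dots> = A * (w + 1) ^ N + B / \<zeta> ^ N * (w * z + 1) ^ N"
    by (simp only: binomial_ring)
  finally show ?thesis by (simp add: \<zeta>_def power_divide add.commute mult_ac)
qed

lemma exists_tilt:
  fixes c b :: real
  assumes c: "0 < c" "c < 1" and b: "0 \<le> b"
  shows "\<exists>z \<delta>. 0 < z \<and> z < 1 \<and> 0 < \<delta> \<and> c * (1 + b * z) / z powr \<delta> < 1"
proof -
  define z where "z = min (1/2) ((1/c - 1) / (2 * (b + 1)))"
  have c1: "0 < 1/c - 1" using c by (simp add: field_simps)
  have z: "0 < z" "z < 1" unfolding z_def using c1 b by auto
  have "b * z \<le> b * ((1/c - 1) / (2 * (b + 1)))" using b unfolding z_def by (intro mult_left_mono) auto
  also have "\<dots> = (b / (b + 1)) * ((1/c - 1) / 2)" using b by (simp add: field_simps)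
  also have "\<dots> \<le> 1 * ((1/c - 1) / 2)" using b c1 by (intro mult_right_mono) auto
  finally have "c * (1 + b * z) \<le> c * (1 + (1/c - 1) / 2)" using c by (intro mult_left_mono) auto
  also have "\<dots> = (c + 1) / 2" using c by (simp add: field_simps)
  finally have "c * (1 + b * z) \<le> (c + 1) / 2" .
  then have d: "0 < c * (1 + b * z)" "c * (1 + b * z) < 1"
    using c b z by (auto intro!: mult_pos_pos add_pos_nonneg)
  define \<delta> where "\<delta> = ln (c * (1 + b * z)) / (2 * ln z)"
  have "0 < \<delta>" unfolding \<delta>_def using d z by (simp add: divide_neg_neg)
  moreover have "z powr \<delta> = exp (ln (c * (1 + b * z)) / 2)"
    unfolding powr_def \<delta>_def using z by simp
  moreover have "ln (c * (1 + b * z)) < 0" using d by simp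
  then have "exp (ln (c * (1 + b * z))) < exp (ln (c * (1 + b * z)) / 2)"
    by (simp only: exp_less_cancel_iff)
  ultimately have "c * (1 + b * z) < z powr \<delta>" "0 < \<delta>" using d by simp_all
  then show ?thesis using z by (intro exI[of _ z] exI[of _ \<delta>]) simp
qed

lemma tendsto_exp_n_power:
  fixes \<kappa> c :: real assumes "0 \<le> \<kappa>" "\<kappa> < 1"
  shows "(\<lambda>N. exp (real N * (c * \<kappa> ^ N))) \<longlonglongrightarrow> 1"
proof -
  have "(\<lambda>N. c * (real N * \<kappa> ^ N)) \<longlonglongrightarrow> c * 0"
    using powser_times_n_limit_0[of \<kappa>] assms by (intro tendsto_mult tendsto_const) simp
  from tendsto_exp[OF this] show ?thesis by (simp add: mult_ac)
qed

definition super_sigma :: "real \<Rightarrow> nat \<Rightarrow> real" where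
  "super_sigma q N = (\<Sum>t\<in>{1..N-1}. real (N choose t) * (super_profile q N t - 1)) / 2 ^ N"

lemma power_pred_le: "0 < c \<Longrightarrow> c \<le> 1 \<Longrightarrow> c ^ (N - 1) \<le> c ^ N / (c::real)"
  by (cases N) (auto simp: field_simps)

context
  fixes q :: real
  assumes q: "0 < q" "q < 1"
begin

lemma super_sigma_nonneg: "0 \<le> super_sigma q N"
  unfolding super_sigma_def using super_profile_ge_1[OF q]
  by (intro divide_nonneg_nonneg sum_nonneg mult_nonneg_nonneg) auto

lemma super_weight_nonneg: "0 \<le> super_weight q N q"
  unfolding super_weight_def using beta_gt_1[OF q] q
  by (intro sum_nonneg mult_nonneg_nonneg zero_le_power divide_nonneg_nonneg) auto

lemma super_sigma_reindex:
  "(\<Sum>t\<in>{1..N-1}. real (N choose t) * (super_profile q N t - 1))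
     = (\<Sum>j\<in>{1..N-1}. real (N choose j) * ((1 + beta q * q ^ j) ^ N - 1))"
proof -
  have "(\<Sum>t\<in>{1..N-1}. real (N choose t) * (super_profile q N t - 1))
      = (\<Sum>j\<in>{1..N-1}. real (N choose (N - 1 + 1 - j)) * (super_profile q N (N - 1 + 1 - j) - 1))"
    by (rule sum.atLeastAtMost_rev)
  also have "\<dots> = (\<Sum>j\<in>{1..N-1}. real (N choose j) * ((1 + beta q * q ^ j) ^ N - 1))"
  proof (rule sum.cong)
    fix j assume "j \<in> {1..N-1}"
    then have "N - 1 + 1 - j = N - j" "j \<le> N" "N - (N - j) = j" by auto
    then show "real (N choose (N - 1 + 1 - j)) * (super_profile q N (N - 1 + 1 - j) - 1)
        = real (N choose j) * ((1 + beta q * q ^ j) ^ N - 1)"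
      by (simp add: super_profile_def binomial_symmetric[symmetric])
  qed simp
  finally show ?thesis .
qed

lemma super_sigma_le:
  assumes z: "0 < z" "z \<le> 1"
  shows "super_sigma q N \<le> ((1 + beta q * (q powr \<delta>) ^ N) ^ N - 1)
           + ((1 + beta q * q) / 2 * (1 + z) / z powr \<delta>) ^ N"
proof -
  define A where "A = (1 + beta q * (q powr \<delta>) ^ N) ^ N - 1"
  define B where "B = (1 + beta q * q) ^ N"
  have b: "0 < beta q" using beta_gt_1[OF q] by simp
  have AB: "0 \<le> A" "0 \<le> B" unfolding A_def B_def using b q by (auto intro: one_le_power)
  have "(\<Sum>j\<in>{1..N-1}. real (N choose j) * ((1 + beta q * q ^ j) ^ N - 1))
      \<le> A * (1 + 1) ^ N + B * ((1 + 1 * z) / z powr \<delta>) ^ N"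
  proof (rule binomial_sum_split_bound[OF _ z _ AB])
    fix j assume j: "j \<in> {1..N-1}" "\<delta> * real N \<le> real j"
    have "(1 + beta q * q ^ j) ^ N \<le> (1 + beta q * (q powr \<delta>) ^ N) ^ N"
      using power_le_powr_power[of q \<delta> N j] j q b by (intro power_mono) auto
    then show "real (N choose j) * ((1 + beta q * q ^ j) ^ N - 1) \<le> real (N choose j) * 1 ^ j * A"
      unfolding A_def by (simp add: mult_left_mono)
  next
    fix j assume j: "j \<in> {1..N-1}"
    have "q ^ j \<le> q" using q j power_decreasing[of 1 j q] by auto
    then have "(1 + beta q * q ^ j) ^ N \<le> B"
      unfolding B_def using b q by (intro power_mono) auto
    then show "real (N choose j) * ((1 + beta q * q ^ j) ^ N - 1) \<le> real (N choose j) * 1 ^ j * B"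
      by (simp add: mult_left_mono)
  qed auto
  then have "super_sigma q N \<le> (A * 2 ^ N + B * ((1 + z) / z powr \<delta>) ^ N) / 2 ^ N"
    unfolding super_sigma_def super_sigma_reindex by (simp add: divide_right_mono)
  moreover have "B * ((1 + z) / z powr \<delta>) ^ N / 2 ^ N = ((1 + beta q * q) / 2 * (1 + z) / z powr \<delta>) ^ N"
    unfolding B_def by (simp add: power_divide power_mult_distrib)
  ultimately show ?thesis unfolding A_def by (simp add: add_divide_distrib)
qed

lemma super_sigma_tendsto_0: "super_sigma q \<longlonglongrightarrow> 0"
proof -
  define c where "c = (1 + beta q * q) / 2"
  have "beta q * q = (1 + q) / 2" unfolding beta_def using q by simp
  then have c: "0 < c" "c < 1" unfolding c_def using q by auto
  obtain z \<delta> where z: "0 < z" "z < 1" "0 < \<delta>" and r: "c * (1 + 1 * z) / z powr \<delta> < 1"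
    using exists_tilt[OF c, of 1] by auto
  define \<kappa> where "\<kappa> = q powr \<delta>"
  have \<kappa>: "0 < \<kappa>" "\<kappa> < 1" unfolding \<kappa>_def using q z by (auto simp: powr01_less_one)
  define U where "U N = (exp (real N * (beta q * \<kappa> ^ N)) - 1) + (c * (1 + z) / z powr \<delta>) ^ N" for N
  have "norm (c * (1 + z) / z powr \<delta>) < 1" using r c z by simp
  then have "U \<longlonglongrightarrow> (1 - 1) + 0"
    unfolding U_def using \<kappa>
    by (intro tendsto_add tendsto_diff tendsto_exp_n_power LIMSEQ_power_zero tendsto_const) simp_all
  moreover have "super_sigma q N \<le> U N" for N
    using super_sigma_le[of z N \<delta>] power_le_exp[of "beta q * \<kappa> ^ N" N] beta_gt_1[OF q] \<kappa> z
    unfolding U_def c_def \<kappa>_def by (simp add: mult_ac)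
  ultimately show ?thesis
    using tendsto_sandwich[of "\<lambda>_. 0" "super_sigma q" sequentially U 0] super_sigma_nonneg by simp
qed

lemma super_weight_le:
  assumes z: "0 < z" "z \<le> 1"
  shows "super_weight q N q \<le> ((q + (q powr \<delta>) ^ N) / (1 + q)) ^ (N - 1) * (1 + beta q) ^ N
           + (2 * q / (1 + q)) ^ (N - 1) * ((1 + beta q * z) / z powr \<delta>) ^ N"
proof -
  have b: "0 < beta q" using beta_gt_1[OF q] by simp
  show ?thesis
    unfolding super_weight_def
  proof (rule order_trans[OF binomial_sum_split_bound[OF _ z]])
    fix j assume j: "j \<in> {1..N}" "\<delta> * real N \<le> real j"
    have "((q + q ^ j) / (1 + q)) ^ (N - 1) \<le> ((q + (q powr \<delta>) ^ N) / (1 + q)) ^ (N - 1)"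
      using power_le_powr_power[of q \<delta> N j] j q by (intro power_mono divide_right_mono) auto
    then show "real (N choose j) * beta q ^ j * ((q + q ^ j) / (1 + q)) ^ (N - 1)
        \<le> real (N choose j) * beta q ^ j * ((q + (q powr \<delta>) ^ N) / (1 + q)) ^ (N - 1)"
      using b by (intro mult_left_mono) auto
  next
    fix j assume j: "j \<in> {1..N}"
    have "q ^ j \<le> q" using q j power_decreasing[of 1 j q] by auto
    then have "((q + q ^ j) / (1 + q)) ^ (N - 1) \<le> (2 * q / (1 + q)) ^ (N - 1)"
      using q by (intro power_mono divide_right_mono) auto
    then show "real (N choose j) * beta q ^ j * ((q + q ^ j) / (1 + q)) ^ (N - 1)
        \<le> real (N choose j) * beta q ^ j * (2 * q / (1 + q)) ^ (N - 1)"
      using b by (intro mult_left_mono) auto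
  qed (use q b in \<open>auto simp: mult_ac\<close>)
qed

lemma shifted_power_le_exp:
  assumes "0 \<le> \<kappa>"
  shows "((q + \<kappa>) / (1 + q)) ^ (N - 1) \<le> (1 + q) / q * ((q / (1 + q)) ^ N * exp (real N * (1 / q * \<kappa>)))"
proof -
  define \<rho> where "\<rho> = q / (1 + q)"
  have \<rho>: "0 < \<rho>" "\<rho> \<le> 1" unfolding \<rho>_def using q by auto
  have "1 + 1 / q * \<kappa> = (q + \<kappa>) / q" using q by (simp add: add_divide_distrib)
  then have "(q + \<kappa>) / (1 + q) = \<rho> * (1 + 1 / q * \<kappa>)"
    unfolding \<rho>_def using q by simp
  then have "((q + \<kappa>) / (1 + q)) ^ (N - 1) = \<rho> ^ (N - 1) * (1 + 1 / q * \<kappa>) ^ (N - 1)"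
    by (simp add: power_mult_distrib)
  also have "\<dots> \<le> \<rho> ^ N / \<rho> * exp (real N * (1 / q * \<kappa>))"
  proof (intro mult_mono power_pred_le \<rho>)
    have "(1 + 1 / q * \<kappa>) ^ (N - 1) \<le> exp (real (N - 1) * (1 / q * \<kappa>))"
      using q assms by (intro power_le_exp) simp
    also have "\<dots> \<le> exp (real N * (1 / q * \<kappa>))"
      using q assms by (intro exp_mono mult_right_mono) auto
    finally show "(1 + 1 / q * \<kappa>) ^ (N - 1) \<le> exp (real N * (1 / q * \<kappa>))" .
  qed (use \<rho> q assms in auto)
  finally show ?thesis unfolding \<rho>_def using q by (simp add: field_simps)
qed

lemma super_weight_tendsto_0: "(\<lambda>N. super_weight q N q) \<longlonglongrightarrow> 0"
proof -
  define b where "b = beta q"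
  have b: "1 < b" unfolding b_def using beta_gt_1[OF q] .
  define c where "c = 2 * q / (1 + q)"
  have c: "0 < c" "c < 1" unfolding c_def using q by (auto simp: field_simps)
  obtain z \<delta> where z: "0 < z" "z < 1" "0 < \<delta>" and r: "c * (1 + b * z) / z powr \<delta> < 1"
    using exists_tilt[OF c, of b] b by auto
  define \<kappa> where "\<kappa> = q powr \<delta>"
  have \<kappa>: "0 < \<kappa>" "\<kappa> < 1" unfolding \<kappa>_def using q z by (auto simp: powr01_less_one)
  define \<rho> where "\<rho> = q / (1 + q)"
  have "\<rho> * b = q * (1 + q) / (q * (1 + q)) / 2"
    unfolding \<rho>_def b_def beta_def by (simp add: mult_ac)
  then have "\<rho> * b = 1 / 2" using q by simp
  moreover have "0 < \<rho>" "\<rho> < 1 / 2" unfolding \<rho>_def using q by (auto simp: field_simps)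
  ultimately have \<rho>: "0 < \<rho>" "\<rho> * (1 + b) < 1" by (auto simp: distrib_left)
  define U where "U N = (1 + q) / q * ((\<rho> * (1 + b)) ^ N * exp (real N * (1 / q * \<kappa> ^ N)))
    + 1 / c * (c * (1 + b * z) / z powr \<delta>) ^ N" for N
  have "norm (c * (1 + b * z) / z powr \<delta>) < 1" "norm (\<rho> * (1 + b)) < 1"
    using r c z b \<rho> by (simp_all add: add_pos_pos)
  then have "U \<longlonglongrightarrow> (1 + q) / q * (0 * 1) + 1 / c * 0"
    unfolding U_def using \<kappa>
    by (intro tendsto_add tendsto_mult tendsto_const tendsto_exp_n_power LIMSEQ_power_zero) simp_all
  moreover have "super_weight q N q \<le> U N" for N
  proof -
    have "((q + \<kappa> ^ N) / (1 + q)) ^ (N - 1) * (1 + b) ^ N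
        \<le> (1 + q) / q * (\<rho> ^ N * exp (real N * (1 / q * \<kappa> ^ N))) * (1 + b) ^ N"
      using shifted_power_le_exp[of "\<kappa> ^ N" N] \<kappa> b unfolding \<rho>_def by (intro mult_right_mono) auto
    moreover have "c ^ (N - 1) * ((1 + b * z) / z powr \<delta>) ^ N \<le> c ^ N / c * ((1 + b * z) / z powr \<delta>) ^ N"
      using c z b by (intro mult_right_mono power_pred_le) auto
    ultimately show ?thesis
      using super_weight_le[of z N \<delta>] z
      unfolding U_def \<kappa>_def[symmetric] b_def[symmetric] c_def[symmetric]
      by (simp add: power_mult_distrib power_divide mult_ac)
  qed
  ultimately show ?thesis
    using tendsto_sandwich[of "\<lambda>_. 0" "\<lambda>N. super_weight q N q" sequentially U 0] super_weight_nonneg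
    by simp
qed

lemma eventually_super_admissible: "eventually (super_admissible q) sequentially"
proof -
  define c where "c = 2 * q / (1 + q)"
  have c: "0 < c" "c < 1" unfolding c_def using q by (auto simp: field_simps)
  have b: "0 < (beta q - 1) / 2" "0 < c * ((beta q - 1) / 4)" using beta_gt_1[OF q] c by auto
  have "eventually (\<lambda>N. super_weight q N q < (beta q - 1) / 2) sequentially"
    using super_weight_tendsto_0 b(1) by (rule order_tendstoD(2))
  moreover have "eventually (\<lambda>N. c ^ N < c * ((beta q - 1) / 4)) sequentially"
    using LIMSEQ_power_zero[of c] c b(2) by (intro order_tendstoD(2)) auto
  ultimately show ?thesis
  proof eventually_elim
    case (elim N)
    have "c ^ (N - 1) \<le> c ^ N / c" using c by (intro power_pred_le) auto
    also have "\<dots> < (beta q - 1) / 4" using elim(2) c by (simp add: divide_less_eq mult.commute)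
    finally show ?case using elim(1) unfolding super_admissible_def c_def by simp
  qed
qed

end

section \<open>The rescaled moment system\<close>

context stationary_moments
begin

definition normalized :: "nat \<Rightarrow> real" where
  "normalized t = \<Phi> t / q ^ (N * t)"

definition mix_ratio :: "nat \<Rightarrow> real" where
  "mix_ratio s = (1 - q ^ s) * q ^ (N - s)"

lemma q_power_pos: "0 < q ^ n"
  using q_pos by simp

lemma moment_eq: "\<Phi> t = q ^ (N * t) * normalized t"
  unfolding normalized_def using q_power_pos[of "N * t"] q_pos by simp

lemma normalized_ge_1: "1 \<le> normalized t"
  unfolding normalized_def using moment_lower[of t] q_power_pos[of "N * t"] by simp

lemma moment_nonneg: "0 \<le> \<Phi> t"
  using moment_lower[of t] q_power_pos[of "N * t"] by linarith

lemma mix_ratio_bounds: "s \<le> N \<Longrightarrow> 0 \<le> mix_ratio s \<and> mix_ratio s \<le> q ^ (N - s)"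
  unfolding mix_ratio_def using q_pos q_less_1 q_power_pos[of s]
  by (auto simp: power_le_one mult_le_cancel_right1)

lemma binomial_mixture_normalized:
  assumes "s \<le> N"
  shows "binomial_mixture N \<Phi> (q ^ s) = q ^ (N * s) * (\<Sum>t\<le>N. real (N choose t) * mix_ratio s ^ t * normalized t)"
  unfolding binomial_mixture_def sum_distrib_left
proof (intro sum.cong refl)
  fix t assume "t \<in> {..N}"
  then have "s * (N - t) + N * t = N * s + (N - s) * t"
    using assms by (simp add: algebra_simps diff_mult_distrib diff_mult_distrib2)
  then have h: "(q ^ s) ^ (N - t) * q ^ (N * t) = q ^ (N * s) * q ^ ((N - s) * t)"
    by (simp add: power_mult[symmetric] power_add[symmetric])
  have "real (N choose t) * (1 - q ^ s) ^ t * (q ^ s) ^ (N - t) * \<Phi> t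
      = real (N choose t) * (1 - q ^ s) ^ t * ((q ^ s) ^ (N - t) * q ^ (N * t)) * normalized t"
    by (simp add: moment_eq mult_ac)
  also have "\<dots> = q ^ (N * s) * (real (N choose t) * ((1 - q ^ s) ^ t * q ^ ((N - s) * t)) * normalized t)"
    unfolding h by (simp add: mult_ac)
  also have "(1 - q ^ s) ^ t * q ^ ((N - s) * t) = mix_ratio s ^ t"
    by (simp only: mix_ratio_def power_mult_distrib power_mult)
  finally show "real (N choose t) * (1 - q ^ s) ^ t * (q ^ s) ^ (N - t) * \<Phi> t
      = q ^ (N * s) * (real (N choose t) * mix_ratio s ^ t * normalized t)" .
qed

lemma normalized_subsolution:
  assumes s: "s \<in> {1..N-1}"
  shows "normalized s \<le> (1 + mix_ratio s ^ N * normalized N)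
           + (\<Sum>t\<in>{1..N-1}. real (N choose t) * mix_ratio s ^ t * normalized t)"
proof -
  have "{..N} = insert 0 (insert N {1..N-1})" "0 \<notin> insert N {1..N-1}" "N \<notin> {1..N-1}"
    using N_pos by auto
  then have split: "(\<Sum>t\<le>N. f t) = f 0 + f N + (\<Sum>t\<in>{1..N-1}. f t)" for f :: "nat \<Rightarrow> real"
    by (simp add: add.assoc)
  have "0 \<le> (1 - q ^ s) * \<Phi> N"
    using q_pos q_less_1 moment_nonneg by (simp add: power_le_one)
  moreover have "1 \<le> s" "s \<le> N" using s by auto
  ultimately have "q ^ (N * s) * normalized s \<le> q ^ (N * s) * (\<Sum>t\<le>N. real (N choose t) * mix_ratio s ^ t * normalized t)"
    using mixture_lower[of s] binomial_mixture_normalized[of s] moment_eq[of s] by linarith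
  then have "normalized s \<le> (\<Sum>t\<le>N. real (N choose t) * mix_ratio s ^ t * normalized t)"
    using q_power_pos by simp
  then show ?thesis
    unfolding split using moment_0 moment_eq[of 0] by simp
qed

lemma normalized_le_supersolution:
  assumes adm: "super_admissible q N" and t: "t \<in> {1..N-1}"
  shows "normalized t \<le> super_profile q N t + normalized N / 2 ^ N * (super_profile q N t - 1)"
proof (rule subsolution_le_supersolution[OF _ normalized_subsolution _ _ _ _ t])
  define R where "R = normalized N / 2 ^ N"
  have R: "0 \<le> R" "mix_ratio s ^ N * normalized N = 2 ^ N * R * mix_ratio s ^ N" for s
    unfolding R_def using normalized_ge_1[of N] by simp_all
  fix s assume s: "s \<in> {1..N-1}"
  then have "0 \<le> mix_ratio s" "mix_ratio s \<le> q ^ (N - s)" using mix_ratio_bounds[of s] by auto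
  from supersolution_step[OF q_pos q_less_1 adm s this R(1)]
  show "1 + mix_ratio s ^ N * normalized N
      + (\<Sum>t\<in>{1..N-1}. real (N choose t) * mix_ratio s ^ t
           * (super_profile q N t + normalized N / 2 ^ N * (super_profile q N t - 1)))
      \<le> super_profile q N s + normalized N / 2 ^ N * (super_profile q N s - 1)"
    unfolding R(2) R_def by (simp add: mult_ac)
  show "0 < 1 + mix_ratio s ^ N * normalized N"
    using mix_ratio_bounds[of s] normalized_ge_1[of N] s by (auto intro: add_pos_nonneg)
  show "0 < super_profile q N s + normalized N / 2 ^ N * (super_profile q N s - 1)"
    using super_profile_ge_1[OF q_pos q_less_1] R(1) unfolding R_def
    by (smt (verit) mult_nonneg_nonneg)
  show "0 \<le> real (N choose t') * mix_ratio s ^ t'" for t'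
    using mix_ratio_bounds[of s] s by auto
qed simp

lemma normalized_top_le_sum: "(1 - q ^ N) * normalized N \<le> (\<Sum>t<N. real (N choose t) * normalized t)"
proof -
  have x: "mix_ratio N = 1 - q ^ N" "0 \<le> mix_ratio N" "mix_ratio N \<le> 1"
    using mix_ratio_bounds[of N] by (simp_all add: mix_ratio_def)
  have "(\<Sum>t<N. real (N choose t) * mix_ratio N ^ t * normalized t)
      \<le> (\<Sum>t<N. real (N choose t) * normalized t)"
  proof (intro sum_mono)
    fix t
    have "mix_ratio N ^ t * (real (N choose t) * normalized t) \<le> real (N choose t) * normalized t"
      using x normalized_ge_1[of t] by (intro mult_left_le_one_le power_le_one) auto
    then show "real (N choose t) * mix_ratio N ^ t * normalized t \<le> real (N choose t) * normalized t"
      by (simp add: mult_ac)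
  qed
  moreover have "mix_ratio N ^ N * normalized N \<le> normalized N"
    using x normalized_ge_1[of N] by (intro mult_left_le_one_le power_le_one) auto
  ultimately have "binomial_mixture N \<Phi> (q ^ N) \<le> q ^ (N * N) * ((\<Sum>t<N. real (N choose t) * normalized t) + normalized N)"
    using binomial_mixture_normalized[of N] q_power_pos[of "N * N"]
    by (simp add: lessThan_Suc_atMost[symmetric] mult_left_mono)
  moreover have "0 \<le> (1 - q ^ N) * \<Phi> N" "\<Phi> N = q ^ (N * N) * normalized N"
    using moment_nonneg moment_eq x by auto
  ultimately have "q ^ (N * N) * ((1 - q ^ N) * normalized N) \<le> q ^ (N * N) * (\<Sum>t<N. real (N choose t) * normalized t)"
    using mixture_lower[OF N_pos order_refl] by (simp add: algebra_simps)
  then show ?thesis using q_power_pos by simp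
qed

lemma normalized_sum_le:
  assumes adm: "super_admissible q N"
  shows "(\<Sum>t<N. real (N choose t) * normalized t)
       \<le> 2 ^ N + 2 ^ N * super_sigma q N * (1 + normalized N / 2 ^ N)"
proof -
  define F where "F = super_profile q N"
  define R where "R = normalized N / 2 ^ N"
  have "{..<N} = insert 0 {1..N-1}" using N_pos by auto
  then have "(\<Sum>t<N. real (N choose t) * normalized t) = 1 + (\<Sum>t\<in>{1..N-1}. real (N choose t) * normalized t)"
    using moment_0 moment_eq[of 0] by simp
  also have "\<dots> \<le> 1 + (\<Sum>t\<in>{1..N-1}. real (N choose t) + real (N choose t) * (F t - 1) * (1 + R))"
  proof (intro add_left_mono sum_mono)
    fix t assume "t \<in> {1..N-1}"
    then have "normalized t \<le> 1 + (F t - 1) * (1 + R)"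
      using normalized_le_supersolution[OF adm] unfolding F_def R_def by (simp add: algebra_simps)
    then have "real (N choose t) * normalized t \<le> real (N choose t) * (1 + (F t - 1) * (1 + R))"
      by (rule mult_left_mono) simp
    then show "real (N choose t) * normalized t \<le> real (N choose t) + real (N choose t) * (F t - 1) * (1 + R)"
      by (simp add: algebra_simps)
  qed
  also have "\<dots> = 1 + (\<Sum>t\<in>{1..N-1}. real (N choose t)) + 2 ^ N * super_sigma q N * (1 + R)"
    by (simp add: sum.distrib super_sigma_def F_def sum_distrib_right)
  also have "(\<Sum>t\<in>{1..N-1}. real (N choose t)) \<le> (\<Sum>t\<in>{1..N}. real (N choose t))"
    by (intro sum_mono2) auto
  also have "\<dots> = 2 ^ N - 1" using binomial_sum_from_1[of N 1 1] by simp
  finally show ?thesis by (simp add: R_def)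
qed

lemma top_moment_upper:
  assumes adm: "super_admissible q N"
  shows "\<Phi> N / (q ^ (N * N) * 2 ^ N) * (1 - q ^ N - super_sigma q N) \<le> 1 + super_sigma q N"
proof -
  define R where "R = normalized N / 2 ^ N"
  have "(1 - q ^ N) * normalized N \<le> 2 ^ N + 2 ^ N * super_sigma q N * (1 + R)"
    using normalized_top_le_sum normalized_sum_le[OF adm] unfolding R_def by linarith
  then have "(1 - q ^ N) * R \<le> 1 + super_sigma q N * (1 + R)"
    unfolding R_def by (simp add: field_simps)
  moreover have "\<Phi> N / (q ^ (N * N) * 2 ^ N) = R"
    unfolding R_def moment_eq[of N] using q_pos by simp
  ultimately show ?thesis by (simp add: algebra_simps)
qed

lemma top_moment_lower:
  "((1 - q ^ N / 2) ^ N - (1 / 2) ^ N) / (1 + real N * q ^ N) \<le> \<Phi> N / (q ^ (N * N) * 2 ^ N)"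
proof -
  define x where "x = 1 - q ^ N"
  have x: "0 \<le> x" "x \<le> 1" "mix_ratio N = x" unfolding x_def mix_ratio_def
    using q_pos q_less_1 by (auto simp: power_le_one)
  have "(\<Sum>t<N. real (N choose t) * x ^ t) \<le> (\<Sum>t<N. real (N choose t) * x ^ t * normalized t)"
    using x normalized_ge_1 by (intro sum_mono) (auto intro!: mult_le_cancel_left1[THEN iffD2])
  moreover have "(\<Sum>t<N. real (N choose t) * x ^ t) = (1 + x) ^ N - x ^ N"
    using binomial_ring[of x 1 N] by (simp add: lessThan_Suc_atMost[symmetric] add.commute)
  ultimately have "q ^ (N * N) * ((1 + x) ^ N - x ^ N + x ^ N * normalized N) \<le> binomial_mixture N \<Phi> (q ^ N)"
    using binomial_mixture_normalized[of N] q_power_pos[of "N * N"] x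
    by (simp add: lessThan_Suc_atMost[symmetric] mult_left_mono)
  then have "q ^ (N * N) * ((1 + x) ^ N - x ^ N + x ^ N * normalized N) \<le> q ^ (N * N) * (2 * normalized N)"
    using mixture_upper moment_eq[of N] by (simp add: mult_ac)
  then have "(1 + x) ^ N - x ^ N + x ^ N * normalized N \<le> 2 * normalized N"
    using q_power_pos[of "N * N"] by (simp only: mult_le_cancel_left_pos)
  then have "(1 + x) ^ N - x ^ N \<le> (2 - x ^ N) * normalized N"
    by (simp add: algebra_simps)
  moreover have "1 - real N * q ^ N \<le> x ^ N" "x ^ N \<le> 1"
    using Bernoulli_inequality[of "- (q ^ N)" N] x q_pos unfolding x_def by (auto simp: power_le_one)
  ultimately have "(1 + x) ^ N - 1 \<le> (1 + real N * q ^ N) * normalized N"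
    using normalized_ge_1[of N] by (smt (verit) mult_right_mono)
  have "((1 + x) ^ N - 1) / 2 ^ N = ((1 + x) / 2) ^ N - (1 / 2) ^ N"
    by (simp add: power_divide diff_divide_distrib)
  moreover have "(1 + x) / 2 = 1 - q ^ N / 2" unfolding x_def by simp
  ultimately have "(1 - q ^ N / 2) ^ N - (1 / 2) ^ N = ((1 + x) ^ N - 1) / 2 ^ N"
    by simp
  also have "\<dots> \<le> (1 + real N * q ^ N) * (normalized N / 2 ^ N)"
    using \<open>(1 + x) ^ N - 1 \<le> (1 + real N * q ^ N) * normalized N\<close> by (simp add: divide_right_mono)
  also have "normalized N / 2 ^ N = \<Phi> N / (q ^ (N * N) * 2 ^ N)"
    unfolding moment_eq[of N] using q_pos by simp
  finally show ?thesis
    using q_power_pos[of N] by (simp add: pos_divide_le_eq add_pos_nonneg mult.commute)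
qed

end

lemma lower_profile_tendsto_1:
  fixes q :: real
  assumes q: "0 < q" "q < 1"
  shows "(\<lambda>N. ((1 - q ^ N / 2) ^ N - (1 / 2) ^ N) / (1 + real N * q ^ N)) \<longlonglongrightarrow> 1"
proof -
  have qN: "(\<lambda>N. q ^ N) \<longlonglongrightarrow> 0" "(\<lambda>N. real N * q ^ N) \<longlonglongrightarrow> 0"
    using q LIMSEQ_power_zero[of q] powser_times_n_limit_0[of q] by auto
  have "(\<lambda>N. 1 - real N * q ^ N / 2) \<longlonglongrightarrow> 1 - 0 / 2"
    by (intro tendsto_diff tendsto_divide tendsto_const qN) simp
  moreover have "1 - real N * q ^ N / 2 \<le> (1 - q ^ N / 2) ^ N" "(1 - q ^ N / 2) ^ N \<le> 1" for N
  proof -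
    have "0 \<le> q ^ N" "q ^ N \<le> 1" using q by (auto simp: power_le_one)
    then show "1 - real N * q ^ N / 2 \<le> (1 - q ^ N / 2) ^ N" "(1 - q ^ N / 2) ^ N \<le> 1"
      using Bernoulli_inequality[of "- (q ^ N / 2)" N] by (auto intro: power_le_one)
  qed
  ultimately have "(\<lambda>N. (1 - q ^ N / 2) ^ N) \<longlonglongrightarrow> 1"
    using tendsto_sandwich[of "\<lambda>N. 1 - real N * q ^ N / 2" "\<lambda>N. (1 - q ^ N / 2) ^ N" sequentially "\<lambda>_. 1" 1]
    by simp
  then have "(\<lambda>N. ((1 - q ^ N / 2) ^ N - (1 / 2) ^ N) / (1 + real N * q ^ N)) \<longlonglongrightarrow> (1 - 0) / (1 + 0)"
    by (intro tendsto_divide tendsto_diff tendsto_add tendsto_const qN LIMSEQ_power_zero) simp_all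
  then show ?thesis by simp
qed

lemma stationary_moments_limit:
  fixes F :: "nat \<Rightarrow> nat \<Rightarrow> real"
  assumes q: "0 < q" "q < 1" and F: "\<And>N. 1 \<le> N \<Longrightarrow> stationary_moments q N (F N)"
  shows "(\<lambda>N. F N N / (q ^ (N * N) * 2 ^ N)) \<longlonglongrightarrow> 1"
proof (rule tendsto_sandwich)
  define \<sigma> where "\<sigma> = super_sigma q"
  have \<sigma>: "\<sigma> \<longlonglongrightarrow> 0" unfolding \<sigma>_def using super_sigma_tendsto_0[OF q] .
  have qN: "(\<lambda>N. q ^ N) \<longlonglongrightarrow> 0"
    using q LIMSEQ_power_zero[of q] by auto
  have "(\<lambda>N. 1 - q ^ N - \<sigma> N) \<longlonglongrightarrow> 1"
    using tendsto_diff[OF tendsto_diff[OF tendsto_const qN] \<sigma>, of 1] by simp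
  from order_tendstoD(1)[OF this, of 0]
  have "eventually (\<lambda>N. 0 < 1 - q ^ N - \<sigma> N) sequentially" by simp
  with eventually_ge_at_top[of 1] eventually_super_admissible[OF q]
  show "eventually (\<lambda>N. F N N / (q ^ (N * N) * 2 ^ N) \<le> (1 + \<sigma> N) / (1 - q ^ N - \<sigma> N)) sequentially"
  proof eventually_elim
    case (elim N)
    with stationary_moments.top_moment_upper[OF F[OF elim(1)] elim(2)]
    show ?case by (simp add: pos_le_divide_eq \<sigma>_def)
  qed
  show "eventually (\<lambda>N. ((1 - q ^ N / 2) ^ N - (1 / 2) ^ N) / (1 + real N * q ^ N)
      \<le> F N N / (q ^ (N * N) * 2 ^ N)) sequentially"
    using eventually_ge_at_top[of 1] by eventually_elim (rule stationary_moments.top_moment_lower[OF F])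
  have "(\<lambda>N. (1 + \<sigma> N) / (1 - q ^ N - \<sigma> N)) \<longlonglongrightarrow> (1 + 0) / (1 - 0 - 0)"
    by (intro tendsto_divide tendsto_add tendsto_diff tendsto_const qN \<sigma>) simp
  then show "(\<lambda>N. (1 + \<sigma> N) / (1 - q ^ N - \<sigma> N)) \<longlonglongrightarrow> 1" by simp
  show "(\<lambda>N. ((1 - q ^ N / 2) ^ N - (1 / 2) ^ N) / (1 + real N * q ^ N)) \<longlonglongrightarrow> 1"
    by (rule lower_profile_tendsto_1[OF q])
qed

theorem proposition6p2:
  fixes k :: int and p :: "int pmf" and \<nu> :: "nat \<Rightarrow> (int \<Rightarrow> nat) pmf"
  assumes supp: "set_pmf p \<subseteq> {l. l \<le> k}"
    and pk_pos: "0 < pmf p k" and pk_lt1: "pmf p k < 1"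
    and inv: "\<And>N. 1 \<le> N \<Longrightarrow> invariant_Z p k N (\<nu> N)"
  shows "(\<lambda>N. measure_pmf.prob (\<nu> N) {m. phi k m \<le> k - 1}
            / ((1 - pmf p k) ^ (N ^ 2) * 2 ^ N)) \<longlonglongrightarrow> 1"
proof -
  define q where "q = 1 - pmf p k"
  have q: "0 < q" "q < 1" using pk_pos pk_lt1 unfolding q_def by auto
  have "stationary_moments q N (lead_moment p k (\<nu> N))" if "1 \<le> N" for N
    unfolding q_def using invariant_stationary_moments[OF supp that inv[OF that] pk_pos pk_lt1] .
  then have "(\<lambda>N. lead_moment p k (\<nu> N) N / (q ^ (N * N) * 2 ^ N)) \<longlonglongrightarrow> 1"
    by (rule stationary_moments_limit[OF q])
  moreover have "eventually (\<lambda>N. lead_moment p k (\<nu> N) N / (q ^ (N * N) * 2 ^ N)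
      = measure_pmf.prob (\<nu> N) {m. phi k m \<le> k - 1} / ((1 - pmf p k) ^ (N ^ 2) * 2 ^ N)) sequentially"
    using eventually_ge_at_top[of 1]
  proof eventually_elim
    case (elim N)
    show ?case using prob_phi_below_top[OF supp elim inv[OF elim]] by (simp add: q_def power2_eq_square)
  qed
  ultimately show ?thesis by (rule Lim_transform_eventually)
qed

end
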